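(* Let $d=2$, $\mathcal{H}$ a separable Hilbert space, $\Lambda=\mathrm{Span}_\mathbb{Z}\{e_1,e_2\}\subset\mathbb{R}^2$, and $\{P(k)\}$ a family of orthogonal projectors of finite rank $m$ satisfying (P2)–(P4) below. Let $r\in\mathbb{Z}$. Then there exists a piecewise-smooth map $X:\partial\mathbb{B}_{\rm red}\to\mathcal{U}(\mathbb{C}^m)$ such that: (i) the winding number (degree) of $\det X:\partial\mathbb{B}_{\rm red}\to U(1)$, with $\partial\mathbb{B}_{\rm red}$ traversed $v_1\to v_2\to\cdots\to v_6\to v_1$, equals $-r$; (ii) whenever $\Phi:\partial\mathbb{B}_{\rm red}\to\mathcal{H}^m$, with $\Phi(k)$ an orthonormal basis of $\operatorname{Ran}P(k)$ for each $k$, satisfies the edge symmetries below, the frame $k\mapsto\Phi(k)\triangleleft X(k)$ also satisfies them; (iii) $X(k)\ne\mathrm{Id}$ only for $k\in E_3\cup E_4$.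
   Context: (P2) $\tau:\Lambda\to\mathcal{U}(\mathcal{H})$ is a unitary representation with $P(k+\lambda)=\tau_\lambda P(k)\tau_\lambda^{-1}$; (P3) $\Theta$ is antiunitary with $P(-k)=\Theta P(k)\Theta^{-1}$, $\Theta^2=\mathrm{Id}$; (P4) $\Theta\tau_\lambda=\tau_\lambda^{-1}\Theta$. In coordinates $(k_1,k_2)\leftrightarrow k_1e_1+k_2e_2$, $\mathbb{B}_{\rm red}=[0,\tfrac12]\times[-\tfrac12,\tfrac12]$, with vertices $v_1=(0,0)$, $v_2=(0,-\tfrac12)$, $v_3=(\tfrac12,-\tfrac12)$, $v_4=(\tfrac12,0)$, $v_5=(\tfrac12,\tfrac12)$, $v_6=(0,\tfrac12)$, and $E_i$ the segment from $v_i$ to $v_{i+1}$ ($v_7=v_1$). Edge symmetries: $\Phi(-k)=\Theta\Phi(k)$ for $k\in E_1\cup E_6$; $\Phi(k+e_2)=\tau_{e_2}\Phi(k)$ for $k\in E_2$; $\Phi(e_1-k)=\tau_{e_1}\Theta\Phi(k)$ for $k\in E_3\cup E_4$; $\Phi(k-e_2)=\tau_{e_2}^{-1}\Phi(k)$ for $k\in E_5$. Operators act on frames componentwise; $(\Phi\triangleleft U)_b=\sum_a\phi_aU_{ab}$. *)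

theory Defs
  imports "HOL-Analysis.Analysis" "HOL-Complex_Analysis.Complex_Analysis"
begin

definition hnorm :: "('h \<Rightarrow> 'h \<Rightarrow> complex) \<Rightarrow> 'h \<Rightarrow> real" where
  "hnorm ip x = sqrt (Re (ip x x))"

definition complex_inner_space :: "(complex \<Rightarrow> 'h::ab_group_add \<Rightarrow> 'h) \<Rightarrow> ('h \<Rightarrow> 'h \<Rightarrow> complex) \<Rightarrow> bool" where
  "complex_inner_space sc ip \<longleftrightarrow>
     (\<forall>a x y. sc a (x + y) = sc a x + sc a y) \<and>
     (\<forall>a b x. sc (a + b) x = sc a x + sc b x) \<and>
     (\<forall>a b x. sc a (sc b x) = sc (a * b) x) \<and>
     (\<forall>x. sc 1 x = x) \<and>
     (\<forall>x y z. ip (x + y) z = ip x z + ip y z) \<and>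
     (\<forall>a x y. ip (sc a x) y = a * ip x y) \<and>
     (\<forall>x y. ip y x = cnj (ip x y)) \<and>
     (\<forall>x. Re (ip x x) \<ge> 0) \<and>
     (\<forall>x. ip x x = 0 \<longrightarrow> x = 0)"

definition hilbert_space :: "(complex \<Rightarrow> 'h::ab_group_add \<Rightarrow> 'h) \<Rightarrow> ('h \<Rightarrow> 'h \<Rightarrow> complex) \<Rightarrow> bool" where
  "hilbert_space sc ip \<longleftrightarrow> complex_inner_space sc ip \<and>
     (\<forall>f :: nat \<Rightarrow> 'h.
        (\<forall>e>0. \<exists>N. \<forall>m\<ge>N. \<forall>n\<ge>N. hnorm ip (f m - f n) < e) \<longrightarrow>
        (\<exists>x. \<forall>e>0. \<exists>N. \<forall>n\<ge>N. hnorm ip (f n - x) < e))"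

definition separable_hs :: "('h::ab_group_add \<Rightarrow> 'h \<Rightarrow> complex) \<Rightarrow> bool" where
  "separable_hs ip \<longleftrightarrow> (\<exists>D. countable D \<and> (\<forall>x e. e > 0 \<longrightarrow> (\<exists>d\<in>D. hnorm ip (x - d) < e)))"

definition clinear_map :: "(complex \<Rightarrow> 'h::ab_group_add \<Rightarrow> 'h) \<Rightarrow> ('h \<Rightarrow> 'h) \<Rightarrow> bool" where
  "clinear_map sc A \<longleftrightarrow> (\<forall>x y. A (x + y) = A x + A y) \<and> (\<forall>c x. A (sc c x) = sc c (A x))"

definition orth_projector :: "(complex \<Rightarrow> 'h::ab_group_add \<Rightarrow> 'h) \<Rightarrow> ('h \<Rightarrow> 'h \<Rightarrow> complex) \<Rightarrow> ('h \<Rightarrow> 'h) \<Rightarrow> bool" where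
  "orth_projector sc ip Q \<longleftrightarrow> clinear_map sc Q \<and> Q \<circ> Q = Q \<and> (\<forall>x y. ip (Q x) y = ip x (Q y))"

definition is_onb :: "(complex \<Rightarrow> 'h::ab_group_add \<Rightarrow> 'h) \<Rightarrow> ('h \<Rightarrow> 'h \<Rightarrow> complex) \<Rightarrow> 'h set \<Rightarrow> ('m::finite \<Rightarrow> 'h) \<Rightarrow> bool" where
  "is_onb sc ip S b \<longleftrightarrow> (\<forall>a a'. ip (b a) (b a') = (if a = a' then 1 else 0)) \<and>
     S = {(\<Sum>a\<in>UNIV. sc (c a) (b a)) | c. True}"

definition unitary_op :: "(complex \<Rightarrow> 'h::ab_group_add \<Rightarrow> 'h) \<Rightarrow> ('h \<Rightarrow> 'h \<Rightarrow> complex) \<Rightarrow> ('h \<Rightarrow> 'h) \<Rightarrow> bool" where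
  "unitary_op sc ip U \<longleftrightarrow> clinear_map sc U \<and> surj U \<and> (\<forall>x y. ip (U x) (U y) = ip x y)"

definition antiunitary_op :: "(complex \<Rightarrow> 'h::ab_group_add \<Rightarrow> 'h) \<Rightarrow> ('h \<Rightarrow> 'h \<Rightarrow> complex) \<Rightarrow> ('h \<Rightarrow> 'h) \<Rightarrow> bool" where
  "antiunitary_op sc ip T \<longleftrightarrow> (\<forall>x y. T (x + y) = T x + T y) \<and> (\<forall>c x. T (sc c x) = sc (cnj c) (T x))
     \<and> surj T \<and> (\<forall>x y. ip (T x) (T y) = cnj (ip x y))"

text \<open>Lattice \<Lambda> = Z e1 + Z e2, in coordinates: (n1,n2) corresponds to n1 e1 + n2 e2.\<close>
definition lat :: "int \<times> int \<Rightarrow> real \<times> real" where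
  "lat n = (of_int (fst n), of_int (snd n))"

definition unitary_rep :: "(complex \<Rightarrow> 'h::ab_group_add \<Rightarrow> 'h) \<Rightarrow> ('h \<Rightarrow> 'h \<Rightarrow> complex) \<Rightarrow> (int \<times> int \<Rightarrow> 'h \<Rightarrow> 'h) \<Rightarrow> bool" where
  "unitary_rep sc ip \<tau> \<longleftrightarrow> (\<forall>l. unitary_op sc ip (\<tau> l)) \<and> (\<forall>l l'. \<tau> (l + l') = \<tau> l \<circ> \<tau> l')"

definition v1 :: "real \<times> real" where "v1 = (0, 0)"
definition v2 :: "real \<times> real" where "v2 = (0, -1/2)"
definition v3 :: "real \<times> real" where "v3 = (1/2, -1/2)"
definition v4 :: "real \<times> real" where "v4 = (1/2, 0)"
definition v5 :: "real \<times> real" where "v5 = (1/2, 1/2)"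
definition v6 :: "real \<times> real" where "v6 = (0, 1/2)"

definition E1 where "E1 = closed_segment v1 v2"
definition E2 where "E2 = closed_segment v2 v3"
definition E3 where "E3 = closed_segment v3 v4"
definition E4 where "E4 = closed_segment v4 v5"
definition E5 where "E5 = closed_segment v5 v6"
definition E6 where "E6 = closed_segment v6 v1"

definition bdry :: "(real \<times> real) set" where
  "bdry = E1 \<union> E2 \<union> E3 \<union> E4 \<union> E5 \<union> E6"

definition bdry_path :: "real \<Rightarrow> real \<times> real" where
  "bdry_path = linepath v1 v2 +++ (linepath v2 v3 +++ (linepath v3 v4 +++
      (linepath v4 v5 +++ (linepath v5 v6 +++ linepath v6 v1))))"

definition e1 :: "real \<times> real" where "e1 = (1, 0)"
definition e2 :: "real \<times> real" where "e2 = (0, 1)"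

definition frame_act :: "(complex \<Rightarrow> 'h::ab_group_add \<Rightarrow> 'h) \<Rightarrow> ('m::finite \<Rightarrow> 'h) \<Rightarrow> complex^'m^'m \<Rightarrow> ('m \<Rightarrow> 'h)" where
  "frame_act sc \<phi> U = (\<lambda>b. \<Sum>a\<in>UNIV. sc (U $ a $ b) (\<phi> a))"

definition edge_sym :: "('h \<Rightarrow> 'h) \<Rightarrow> (int \<times> int \<Rightarrow> 'h \<Rightarrow> 'h) \<Rightarrow> (real \<times> real \<Rightarrow> 'm \<Rightarrow> 'h) \<Rightarrow> bool" where
  "edge_sym \<Theta> \<tau> \<Phi> \<longleftrightarrow>
     (\<forall>k\<in>E1 \<union> E6. \<Phi> (-k) = \<Theta> \<circ> \<Phi> k) \<and>
     (\<forall>k\<in>E2. \<Phi> (k + e2) = \<tau> (0, 1) \<circ> \<Phi> k) \<and>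
     (\<forall>k\<in>E3 \<union> E4. \<Phi> (e1 - k) = \<tau> (1, 0) \<circ> \<Theta> \<circ> \<Phi> k) \<and>
     (\<forall>k\<in>E5. \<Phi> (k - e2) = inv (\<tau> (0, 1)) \<circ> \<Phi> k)"

definition cadjoint :: "complex^'m^'m \<Rightarrow> complex^'m^'m" where
  "cadjoint U = (\<chi> i j. cnj (U $ j $ i))"

definition unitary_mat :: "complex^'m^'m \<Rightarrow> bool" where
  "unitary_mat U \<longleftrightarrow> U ** cadjoint U = mat 1 \<and> cadjoint U ** U = mat 1"

definition smooth_on_open :: "(real \<Rightarrow> 'a::real_normed_vector) \<Rightarrow> real set \<Rightarrow> bool" where
  "smooth_on_open f U \<longleftrightarrow> (\<exists>D :: nat \<Rightarrow> real \<Rightarrow> 'a. (\<forall>t\<in>U. D 0 t = f t) \<and>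
      (\<forall>n. \<forall>t\<in>U. (D n has_vector_derivative D (Suc n) t) (at t)))"

definition piecewise_smooth_on :: "(real \<Rightarrow> 'a::real_normed_vector) \<Rightarrow> real set \<Rightarrow> bool" where
  "piecewise_smooth_on f I \<longleftrightarrow> continuous_on I f \<and>
      (\<exists>S. finite S \<and> smooth_on_open f (interior I - S))"

end

theory Submission
  imports Defs
begin

text \<open>Take X(k) = diag(g(k), 1, ..., 1) with g = 1 off the edge E3 \<union> E4 = {1/2} \<times> [-1/2, 1/2]
  and g(1/2, s) = exp(2 \<pi> i n (s + 1/2)) on it, where n = -r. Along E3 \<union> E4 the phase g winds
  n times around the unit circle and equals 1 at both ends, so det X = g has degree n. The
  symmetry of E3 \<union> E4 involves the antiunitary \<Theta>, which conjugates matrix entries; it is preserved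
  because g(e1 - k) = conj g(k) there. The construction does
  not involve the projectors P at all.\<close>

subsection \<open>Exponential paths\<close>

definition exp_path :: "complex \<Rightarrow> complex \<Rightarrow> real \<Rightarrow> complex" where
  "exp_path a c t = exp (a + c * of_real t)"

lemma exp_path_has_vector_derivative:
  "(exp_path a c has_vector_derivative c * exp_path a c t) (at t within S)"
proof -
  have "((\<lambda>z. exp (a + c * z)) has_field_derivative exp (a + c * of_real t) * c) (at (of_real t))"
    by (auto intro!: derivative_eq_intros)
  from has_vector_derivative_real_field[OF this, of S] show ?thesis
    by (simp add: exp_path_def[abs_def] mult.commute)
qed

lemma continuous_on_exp_path: "continuous_on S (exp_path a c)"
  unfolding exp_path_def[abs_def] by (intro continuous_intros)

lemma path_exp_path: "path (exp_path a c)"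
  by (simp add: path_def continuous_on_exp_path)

lemma zero_notin_path_image_exp_path: "0 \<notin> path_image (exp_path a c)"
  by (auto simp: path_image_def exp_path_def)

lemma pathstart_exp_path: "pathstart (exp_path a c) = exp a"
  by (simp add: pathstart_def exp_path_def)

lemma valid_path_exp_path: "valid_path (exp_path a c)"
proof -
  have "exp_path a c C1_differentiable_on {0..1}"
    unfolding C1_differentiable_on_def
    using exp_path_has_vector_derivative[of a c _ UNIV]
    by (intro exI[of _ "\<lambda>t. c * exp_path a c t"])
       (auto simp: exp_path_def[abs_def] intro!: continuous_intros)
  then show ?thesis
    by (simp add: valid_path_def C1_differentiable_imp_piecewise)
qed

lemma winding_number_exp_path: "winding_number (exp_path a c) 0 = c / (2 * pi * \<i>)"
proof -
  have "((\<lambda>w. 1 / (w - 0)) has_contour_integral c) (exp_path a c)"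
    unfolding has_contour_integral_def
  proof (rule has_integral_eq[where f = "\<lambda>_. c"])
    fix t :: real assume "t \<in> {0..1}"
    then have "vector_derivative (exp_path a c) (at t within {0..1}) = c * exp_path a c t"
      by (intro vector_derivative_within_closed_interval exp_path_has_vector_derivative) auto
    then show "c = 1 / (exp_path a c t - 0) * vector_derivative (exp_path a c) (at t within {0..1})"
      by (simp add: exp_path_def)
  qed (use has_integral_const_real[of c 0 1] in simp)
  then show ?thesis
    using winding_number_valid_path[OF valid_path_exp_path zero_notin_path_image_exp_path]
      contour_integral_unique by simp
qed

lemma pathfinish_exp_path: "pathfinish (exp_path a c) = exp (a + c)"
  by (simp add: pathfinish_def exp_path_def)

lemma winding_number_exp_path_join:
  assumes "path q" "0 \<notin> path_image q" "pathfinish (exp_path a c) = pathstart q"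
  shows "winding_number (exp_path a c +++ q) 0 = c / (2 * pi * \<i>) + winding_number q 0"
  using winding_number_join[OF path_exp_path zero_notin_path_image_exp_path assms]
  by (simp add: winding_number_exp_path)

subsection \<open>Smooth and piecewise smooth paths\<close>

lemma smooth_on_open_exp_path: "smooth_on_open (exp_path a c) U"
proof -
  have "((\<lambda>t. c ^ n * exp_path a c t) has_vector_derivative c ^ Suc n * exp_path a c t) (at t)"
    for n t
    by (rule has_vector_derivative_eq_rhs
        [OF has_vector_derivative_mult_right[OF exp_path_has_vector_derivative]])
       (simp add: ac_simps)
  then show ?thesis
    unfolding smooth_on_open_def by (intro exI[of _ "\<lambda>n t. c ^ n * exp_path a c t"]) simp
qed

lemma smooth_on_open_affine_image:
  assumes f: "smooth_on_open f U" and L: "bounded_linear L"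
  shows "smooth_on_open (\<lambda>t. C + L (f t)) U"
proof -
  obtain D where D0: "\<forall>t\<in>U. D 0 t = f t"
    and D: "\<forall>n. \<forall>t\<in>U. (D n has_vector_derivative D (Suc n) t) (at t)"
    using f unfolding smooth_on_open_def by blast
  show ?thesis
    unfolding smooth_on_open_def
  proof (intro exI[of _ "\<lambda>n t. (if n = 0 then C else 0) + L (D n t)"] conjI allI ballI)
    fix n t assume "t \<in> U"
    then show "((\<lambda>t. (if n = 0 then C else 0) + L (D n t)) has_vector_derivative
        (if Suc n = 0 then C else 0) + L (D (Suc n) t)) (at t)"
      using bounded_linear.has_vector_derivative[OF L D[rule_format]]
      by (auto intro!: derivative_eq_intros)
  qed (use D0 in simp)
qed

lemma smooth_on_open_cong:
  assumes "smooth_on_open f U" "V \<subseteq> U" "\<And>t. t \<in> V \<Longrightarrow> g t = f t"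
  shows "smooth_on_open g V"
proof -
  obtain D where "\<forall>t\<in>U. D 0 t = f t" "\<forall>n. \<forall>t\<in>U. (D n has_vector_derivative D (Suc n) t) (at t)"
    using assms(1) unfolding smooth_on_open_def by blast
  with assms(2,3) show ?thesis
    unfolding smooth_on_open_def by (intro exI[of _ D]) auto
qed

lemma smooth_on_open_Un:
  assumes "smooth_on_open f U" "smooth_on_open f V" "open U" "open V" "U \<inter> V = {}"
  shows "smooth_on_open f (U \<union> V)"
proof -
  obtain DU where DU0: "\<forall>t\<in>U. DU 0 t = f t"
    and DU: "\<forall>n. \<forall>t\<in>U. (DU n has_vector_derivative DU (Suc n) t) (at t)"
    using assms(1) unfolding smooth_on_open_def by blast
  obtain DV where DV0: "\<forall>t\<in>V. DV 0 t = f t"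
    and DV: "\<forall>n. \<forall>t\<in>V. (DV n has_vector_derivative DV (Suc n) t) (at t)"
    using assms(2) unfolding smooth_on_open_def by blast
  define D where "D n t = (if t \<in> U then DU n t else DV n t)" for n t
  have "(D n has_vector_derivative D (Suc n) t) (at t)" if "t \<in> U \<union> V" for n t
  proof (cases "t \<in> U")
    case True
    have "D (Suc n) t = DU (Suc n) t" "\<And>s. s \<in> U \<Longrightarrow> DU n s = D n s"
      using True by (simp_all add: D_def)
    with DU True assms(3) show ?thesis
      using has_vector_derivative_transform_within_open[of "DU n" "DU (Suc n) t" t U "D n"] by simp
  next
    case False
    with that have "t \<in> V" by simp
    have "D (Suc n) t = DV (Suc n) t" "\<And>s. s \<in> V \<Longrightarrow> DV n s = D n s"
      using False assms(5) by (auto simp: D_def)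
    with DV \<open>t \<in> V\<close> assms(4) show ?thesis
      using has_vector_derivative_transform_within_open[of "DV n" "DV (Suc n) t" t V "D n"] by simp
  qed
  moreover have "D 0 t = f t" if "t \<in> U \<union> V" for t
    using that DU0 DV0 by (auto simp: D_def)
  ultimately show ?thesis
    unfolding smooth_on_open_def by blast
qed

lemma smooth_on_open_affine_reparam:
  fixes \<alpha> \<beta> :: real
  assumes "smooth_on_open f U"
  shows "smooth_on_open (\<lambda>t. f (\<alpha> * t + \<beta>)) ((\<lambda>t. \<alpha> * t + \<beta>) -` U)"
proof -
  obtain D where D0: "\<forall>t\<in>U. D 0 t = f t"
    and D: "\<forall>n. \<forall>t\<in>U. (D n has_vector_derivative D (Suc n) t) (at t)"
    using assms unfolding smooth_on_open_def by blast
  have "((\<lambda>s. \<alpha> ^ n *\<^sub>R D n (\<alpha> * s + \<beta>)) has_vector_derivative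
          \<alpha> ^ Suc n *\<^sub>R D (Suc n) (\<alpha> * t + \<beta>)) (at t)"
    if "\<alpha> * t + \<beta> \<in> U" for n t
  proof -
    have "((\<lambda>s. \<alpha> * s + \<beta>) has_vector_derivative \<alpha>) (at t)"
      by (auto intro!: derivative_eq_intros)
    from vector_diff_chain_at[OF this D[rule_format, OF that]]
    have "((\<lambda>s. D n (\<alpha> * s + \<beta>)) has_vector_derivative \<alpha> *\<^sub>R D (Suc n) (\<alpha> * t + \<beta>)) (at t)"
      by (simp add: o_def)
    from bounded_linear.has_vector_derivative[OF bounded_linear_scaleR_right this, of "\<alpha> ^ n"]
    show ?thesis
      by (simp add: mult.commute)
  qed
  then show ?thesis
    unfolding smooth_on_open_def using D0
    by (intro exI[of _ "\<lambda>n t. \<alpha> ^ n *\<^sub>R D n (\<alpha> * t + \<beta>)"]) auto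
qed

lemma comp_joinpaths: "f \<circ> (a +++ b) = (f \<circ> a) +++ (f \<circ> b)"
  by (auto simp: fun_eq_iff joinpaths_def)

definition piecewise_smooth_path :: "(real \<Rightarrow> 'a::real_normed_vector) \<Rightarrow> bool" where
  "piecewise_smooth_path f \<longleftrightarrow> (\<exists>S. finite S \<and> smooth_on_open f ({0<..<1} - S))"

lemma piecewise_smooth_on_unit_interval:
  "path f \<Longrightarrow> piecewise_smooth_path f \<Longrightarrow> piecewise_smooth_on f {0..1}"
  by (simp add: piecewise_smooth_on_def piecewise_smooth_path_def path_def)

lemma smooth_on_open_joinpaths:
  assumes a: "smooth_on_open a ({0<..<1} - Sa)" and b: "smooth_on_open b ({0<..<1} - Sb)"
    and fin: "finite Sa" "finite Sb"
  shows "smooth_on_open (a +++ b)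
    (({0<..<1/2} - (\<lambda>x. x / 2) ` Sa) \<union> ({1/2<..<1} - (\<lambda>x. (x + 1) / 2) ` Sb))"
    (is "smooth_on_open _ (?U \<union> ?V)")
proof (rule smooth_on_open_Un)
  have U: "0 < t \<and> t < 1/2 \<and> 2 * t + 0 \<notin> Sa" if "t \<in> ?U" for t
  proof -
    have "2 * t \<notin> Sa"
      using that by (metis Diff_iff image_eqI nonzero_mult_div_cancel_left zero_neq_numeral)
    then show ?thesis
      using that by simp
  qed
  have V: "1/2 < t \<and> t < 1 \<and> 2 * t + -1 \<notin> Sb" if "t \<in> ?V" for t
  proof -
    have "t \<notin> (\<lambda>x. (x + 1) / 2) ` Sb"
      using that by simp
    then have "2 * t - 1 \<notin> Sb"
      by (rule contrapos_nn) (rule image_eqI, auto)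
    then show ?thesis
      using that by simp
  qed
  show "smooth_on_open (a +++ b) ?U"
    by (rule smooth_on_open_cong[OF smooth_on_open_affine_reparam[OF a, of 2 0]])
       (auto simp: joinpaths_def dest!: U)
  show "smooth_on_open (a +++ b) ?V"
    by (rule smooth_on_open_cong[OF smooth_on_open_affine_reparam[OF b, of 2 "-1"]])
       (auto simp: joinpaths_def dest!: V)
  show "open ?U" "open ?V"
    using fin by (simp_all add: open_Diff finite_imp_closed)
  show "?U \<inter> ?V = {}"
    by (auto dest!: U V)
qed

lemma piecewise_smooth_path_join:
  assumes "piecewise_smooth_path a" "piecewise_smooth_path b"
  shows "piecewise_smooth_path (a +++ b)"
proof -
  obtain Sa Sb where fin: "finite Sa" "finite Sb"
    and smooth: "smooth_on_open a ({0<..<1} - Sa)" "smooth_on_open b ({0<..<1} - Sb)"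
    using assms unfolding piecewise_smooth_path_def by blast
  define S where "S = {1/2} \<union> (\<lambda>x. x / 2) ` Sa \<union> (\<lambda>x. (x + 1) / 2) ` Sb"
  from smooth_on_open_joinpaths[OF smooth fin]
  have "smooth_on_open (a +++ b) ({0<..<1} - S)"
  proof (rule smooth_on_open_cong)
    show "{0<..<1} - S \<subseteq> ({0<..<1/2} - (\<lambda>x. x / 2) ` Sa) \<union> ({1/2<..<1} - (\<lambda>x. (x + 1) / 2) ` Sb)"
    proof
      fix t assume "t \<in> {0<..<1} - S"
      then have "0 < t \<and> t < 1 \<and> t \<noteq> 1/2 \<and>
          t \<notin> (\<lambda>x. x / 2) ` Sa \<and> t \<notin> (\<lambda>x. (x + 1) / 2) ` Sb"
        unfolding S_def by (simp only: Diff_iff Un_iff insert_iff greaterThanLessThan_iff) blast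
      then show "t \<in> ({0<..<1/2} - (\<lambda>x. x / 2) ` Sa) \<union> ({1/2<..<1} - (\<lambda>x. (x + 1) / 2) ` Sb)"
        by (simp add: linorder_neq_iff)
    qed
  qed simp
  moreover have "finite S"
    using fin by (simp add: S_def)
  ultimately show ?thesis
    unfolding piecewise_smooth_path_def by blast
qed

subsection \<open>Diagonal phase matrices\<close>

definition phase_mat :: "'m::finite \<Rightarrow> complex \<Rightarrow> complex^'m^'m" where
  "phase_mat i0 z = (\<chi> i j. if i = j then if i = i0 then z else 1 else 0)"

lemma phase_mat_nth [simp]: "phase_mat i0 z $ i $ j = (if i = j then if i = i0 then z else 1 else 0)"
  by (simp add: phase_mat_def)

lemma phase_mat_one: "phase_mat i0 1 = mat 1"
  by (simp add: vec_eq_iff mat_def)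

lemma det_phase_mat: "det (phase_mat i0 z) = z"
proof -
  have "det (phase_mat i0 z) = (\<Prod>i\<in>UNIV. phase_mat i0 z $ i $ i)"
    by (rule det_diagonal) simp
  also have "\<dots> = z"
    by (simp add: prod.delta)
  finally show ?thesis .
qed

lemma phase_mat_mult: "phase_mat i0 z ** phase_mat i0 w = phase_mat i0 (z * w)"
  unfolding matrix_matrix_mult_def
  by (simp add: vec_eq_iff if_distrib[of "\<lambda>x. x * _"] cong: if_cong)

lemma unitary_mat_phase_mat:
  assumes "cmod z = 1"
  shows "unitary_mat (phase_mat i0 z)"
proof -
  have "z * cnj z = 1" "cnj z * z = 1"
    using assms complex_norm_square[of z] by (simp_all add: mult.commute)
  moreover have "cadjoint (phase_mat i0 z) = phase_mat i0 (cnj z)"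
    by (simp add: vec_eq_iff cadjoint_def)
  ultimately show ?thesis
    by (simp add: unitary_mat_def phase_mat_mult phase_mat_one)
qed

lemma bounded_linear_phase_mat_diff: "bounded_linear (\<lambda>z. phase_mat i0 z - phase_mat i0 0)"
proof -
  have "linear (\<lambda>z. phase_mat i0 z - phase_mat i0 0)"
    by (rule linearI) (auto simp: vec_eq_iff)
  then show ?thesis
    by (simp add: linear_conv_bounded_linear)
qed

lemma continuous_on_phase_mat: "continuous_on S (phase_mat i0)"
proof -
  have "continuous_on S (\<lambda>z. phase_mat i0 0 + (phase_mat i0 z - phase_mat i0 0))"
    by (intro continuous_intros linear_continuous_on bounded_linear_phase_mat_diff)
  then show ?thesis
    by simp
qed

lemma piecewise_smooth_path_phase_mat_exp_path:
  "piecewise_smooth_path (phase_mat i0 \<circ> exp_path a c)"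
proof -
  have "smooth_on_open (\<lambda>t. phase_mat i0 0 + (phase_mat i0 (exp_path a c t) - phase_mat i0 0)) {0<..<1}"
    by (rule smooth_on_open_affine_image[OF smooth_on_open_exp_path bounded_linear_phase_mat_diff])
  then show ?thesis
    unfolding piecewise_smooth_path_def by (intro exI[of _ "{}"]) (simp add: o_def)
qed

lemma piecewise_smooth_path_comp_join:
  "piecewise_smooth_path (f \<circ> a) \<Longrightarrow> piecewise_smooth_path (f \<circ> b) \<Longrightarrow>
    piecewise_smooth_path (f \<circ> (a +++ b))"
  by (simp add: comp_joinpaths piecewise_smooth_path_join)

subsection \<open>The boundary phase\<close>

definition boundary_phase :: "int \<Rightarrow> real \<times> real \<Rightarrow> complex" where
  "boundary_phase n k = (if fst k = 1/2 then cis (2 * pi * of_int n * (snd k + 1/2)) else 1)"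

lemma boundary_phase_bdry_path:
  fixes n :: int
  defines "c \<equiv> \<i> * of_real (pi * of_int n)"
  shows "boundary_phase n \<circ> bdry_path =
    exp_path 0 0 +++ (exp_path 0 0 +++ (exp_path 0 c +++ (exp_path c c +++
      (exp_path 0 0 +++ exp_path 0 0))))"
proof -
  have const: "exp_path 0 0 = (\<lambda>_. 1)"
    by (simp add: exp_path_def fun_eq_iff)
  have cis_n: "cis (2 * pi * of_int n) = 1"
    by (rule cis_multiple_2pi) simp
  have "boundary_phase n \<circ> linepath v1 v2 = exp_path 0 0"
    "boundary_phase n \<circ> linepath v2 v3 = exp_path 0 0"
    "boundary_phase n \<circ> linepath v5 v6 = exp_path 0 0"
    "boundary_phase n \<circ> linepath v6 v1 = exp_path 0 0"
    by (simp_all add: const fun_eq_iff boundary_phase_def linepath_def cis_n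
        v1_def v2_def v3_def v5_def v6_def)
  moreover have "boundary_phase n \<circ> linepath v3 v4 = exp_path 0 c"
  proof
    fix t :: real
    have "linepath v3 v4 t = (1/2, t/2 - 1/2)"
      by (simp add: linepath_def v3_def v4_def prod_eq_iff field_simps)
    moreover have "2 * pi * of_int n * (t/2 - 1/2 + 1/2) = pi * of_int n * t"
      by simp
    ultimately show "(boundary_phase n \<circ> linepath v3 v4) t = exp_path 0 c t"
      by (simp add: boundary_phase_def cis_conv_exp exp_path_def c_def mult.assoc)
  qed
  moreover have "boundary_phase n \<circ> linepath v4 v5 = exp_path c c"
  proof
    fix t :: real
    have "linepath v4 v5 t = (1/2, t/2)"
      by (simp add: linepath_def v4_def v5_def prod_eq_iff field_simps)
    moreover have "2 * pi * of_int n * (t/2 + 1/2) = pi * of_int n + pi * of_int n * t"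
      by (simp add: algebra_simps)
    ultimately show "(boundary_phase n \<circ> linepath v4 v5) t = exp_path c c t"
      by (simp add: boundary_phase_def cis_conv_exp exp_path_def c_def algebra_simps)
  qed
  ultimately show ?thesis
    unfolding bdry_path_def comp_joinpaths by simp
qed

lemma boundary_phase_bdry_path_winding:
  shows path_boundary_phase_bdry_path: "path (boundary_phase n \<circ> bdry_path)"
    and winding_number_boundary_phase_bdry_path:
      "winding_number (boundary_phase n \<circ> bdry_path) 0 = of_int n"
proof -
  define c where "c = \<i> * of_real (pi * of_int n)"
  have "exp (c + c) = 1"
  proof -
    have "exp (c + c) = cis (2 * pi * of_int n)"
      by (simp add: c_def cis_conv_exp algebra_simps)
    then show ?thesis
      by (simp add: cis_multiple_2pi)
  qed
  then have "path (boundary_phase n \<circ> bdry_path) \<and>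
      winding_number (boundary_phase n \<circ> bdry_path) 0 = 2 * (c / (2 * pi * \<i>))"
    unfolding boundary_phase_bdry_path c_def[symmetric]
    by (simp add: path_exp_path zero_notin_path_image_exp_path pathstart_exp_path
        pathfinish_exp_path path_image_join winding_number_exp_path_join winding_number_exp_path)
  moreover have "2 * (c / (2 * pi * \<i>)) = of_int n"
    by (simp add: c_def field_simps)
  ultimately show "path (boundary_phase n \<circ> bdry_path)"
    "winding_number (boundary_phase n \<circ> bdry_path) 0 = of_int n"
    by simp_all
qed

lemma piecewise_smooth_path_phase_mat_boundary_phase:
  "piecewise_smooth_path (phase_mat i0 \<circ> (boundary_phase n \<circ> bdry_path))"
  unfolding boundary_phase_bdry_path
  by (intro piecewise_smooth_path_comp_join piecewise_smooth_path_phase_mat_exp_path)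

lemma fst_E1_E6: "k \<in> E1 \<union> E6 \<Longrightarrow> fst k = 0"
  by (auto simp: E1_def E6_def v1_def v2_def v6_def closed_segment_same_fst)

lemma fst_E3_E4: "k \<in> E3 \<union> E4 \<Longrightarrow> fst k = 1/2"
  by (auto simp: E3_def E4_def v3_def v4_def v5_def closed_segment_same_fst)

lemma snd_E2: "k \<in> E2 \<Longrightarrow> snd k = -1/2"
  by (auto simp: E2_def v2_def v3_def closed_segment_same_snd)

lemma snd_E5: "k \<in> E5 \<Longrightarrow> snd k = 1/2"
  by (auto simp: E5_def v5_def v6_def closed_segment_same_snd)

lemma norm_boundary_phase: "cmod (boundary_phase n k) = 1"
  by (simp add: boundary_phase_def)

lemma boundary_phase_add_e2: "boundary_phase n (k + e2) = boundary_phase n k"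
proof -
  have "cis (2 * pi * of_int n * (snd k + 1 + 1/2)) =
      cis (2 * pi * of_int n * (snd k + 1/2)) * cis (2 * pi * of_int n)"
    by (simp add: cis_mult algebra_simps)
  then show ?thesis
    by (simp add: boundary_phase_def e2_def cis_multiple_2pi)
qed

lemma boundary_phase_diff_e2: "boundary_phase n (k - e2) = boundary_phase n k"
  using boundary_phase_add_e2[of n "k - e2"] by simp

lemma boundary_phase_e1_diff:
  assumes "fst k = 1/2"
  shows "boundary_phase n (e1 - k) = cnj (boundary_phase n k)"
proof -
  have "cis (2 * pi * of_int n * (- snd k + 1/2)) =
      cis (- (2 * pi * of_int n * (snd k + 1/2))) * cis (2 * pi * of_int n)"
    by (simp add: cis_mult algebra_simps)
  then show ?thesis
    using assms by (simp add: boundary_phase_def e1_def cis_cnj cis_multiple_2pi)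
qed

lemma boundary_phase_E1_E6:
  assumes "k \<in> E1 \<union> E6"
  shows "boundary_phase n k = 1" "boundary_phase n (- k) = 1"
  using assms by (simp_all add: boundary_phase_def fst_E1_E6)

lemma boundary_phase_off_E3_E4:
  assumes "k \<in> bdry" "k \<notin> E3 \<union> E4"
  shows "boundary_phase n k = 1"
proof -
  have "cis (2 * pi * of_int n) = 1"
    by (simp add: cis_multiple_2pi)
  moreover have "k \<in> E1 \<union> E6 \<or> k \<in> E2 \<or> k \<in> E5"
    using assms by (auto simp: bdry_def)
  ultimately show ?thesis
    using boundary_phase_E1_E6(1)[of k] by (auto simp: boundary_phase_def snd_E2 snd_E5)
qed

subsection \<open>Frames\<close>

lemma frame_act_semilinear:
  fixes Y Z :: "complex^'m::finite^'m"
  assumes "Modules.additive A" "\<And>c x. A (sc c x) = sc (f c) (A x)" "\<And>a b. Y $ a $ b = f (Z $ a $ b)"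
  shows "frame_act sc (A \<circ> \<phi>) Y = A \<circ> frame_act sc \<phi> Z"
  unfolding frame_act_def o_def
  by (simp add: Modules.additive.sum[OF assms(1)] assms(2,3))

lemma unitary_op_inj:
  assumes "complex_inner_space sc ip" "unitary_op sc ip U"
  shows "inj U"
proof (rule injI)
  fix x y assume "U x = U y"
  have U: "Modules.additive U" "\<And>x y. ip (U x) (U y) = ip x y"
    using assms(2) by (auto simp: unitary_op_def clinear_map_def Modules.additive_def)
  have ip_add: "\<forall>x y z. ip (x + y) z = ip x z + ip y z"
    using assms(1) unfolding complex_inner_space_def by (elim conjE) assumption
  have definite: "\<forall>x. ip x x = 0 \<longrightarrow> x = 0"
    using assms(1) unfolding complex_inner_space_def by (elim conjE) assumption
  have "ip (x - y) (x - y) = ip (U (x - y)) (U (x - y))"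
    by (simp add: U(2))
  also have "\<dots> = ip 0 0"
    using \<open>U x = U y\<close> by (simp add: Modules.additive.diff[OF U(1)])
  also have "\<dots> = 0"
    using ip_add[rule_format, of 0 0 0] by simp
  finally have "x - y = 0"
    using definite by blast
  then show "x = y"
    by simp
qed

lemma inv_additive_commuting:
  assumes "bij U" "Modules.additive U" "\<And>c x. U (sc c x) = sc c (U x)"
  shows "Modules.additive (inv U)" "inv U (sc c x) = sc c (inv U x)"
proof -
  have U_inv: "U (inv U x) = x" and inv_U: "inv U (U x) = x" for x
    using assms(1) by (simp_all add: bij_is_surj surj_f_inv_f bij_is_inj)
  show "Modules.additive (inv U)"
    by (rule Modules.additive.intro) (metis U_inv inv_U Modules.additive.add[OF assms(2)])
  show "inv U (sc c x) = sc c (inv U x)"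
    by (metis U_inv inv_U assms(3))
qed

lemma edge_sym_frame_act:
  fixes X :: "real \<times> real \<Rightarrow> complex^'m::finite^'m"
  assumes H: "complex_inner_space sc ip"
    and \<tau>: "\<And>l. unitary_op sc ip (\<tau> l)" and \<Theta>: "antiunitary_op sc ip \<Theta>"
    and X16: "\<And>k a b. k \<in> E1 \<union> E6 \<Longrightarrow> X (- k) $ a $ b = cnj (X k $ a $ b)"
    and X2: "\<And>k. k \<in> E2 \<Longrightarrow> X (k + e2) = X k"
    and X34: "\<And>k a b. k \<in> E3 \<union> E4 \<Longrightarrow> X (e1 - k) $ a $ b = cnj (X k $ a $ b)"
    and X5: "\<And>k. k \<in> E5 \<Longrightarrow> X (k - e2) = X k"
    and \<Phi>: "edge_sym \<Theta> \<tau> \<Phi>"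
  shows "edge_sym \<Theta> \<tau> (\<lambda>k. frame_act sc (\<Phi> k) (X k))"
proof -
  have \<tau>_lin: "Modules.additive (\<tau> l)" "\<And>c x. \<tau> l (sc c x) = sc c (\<tau> l x)" for l
    using \<tau>[of l] by (simp_all add: unitary_op_def clinear_map_def Modules.additive_def)
  have "bij (\<tau> (0, 1))"
    using \<tau>[of "(0, 1)"] unitary_op_inj[OF H] by (simp add: bij_def unitary_op_def)
  note \<tau>_inv_lin = inv_additive_commuting[where sc = sc, OF this \<tau>_lin[of "(0, 1)"]]
  have \<Theta>_antilin: "Modules.additive \<Theta>" "\<And>c x. \<Theta> (sc c x) = sc (cnj c) (\<Theta> x)"
    using \<Theta> by (simp_all add: antiunitary_op_def Modules.additive_def)
  have \<tau>\<Theta>_antilin: "Modules.additive (\<tau> l \<circ> \<Theta>)" "\<And>c x. (\<tau> l \<circ> \<Theta>) (sc c x) = sc (cnj c) ((\<tau> l \<circ> \<Theta>) x)"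
    for l
    using \<tau>_lin[of l] \<Theta>_antilin by (simp_all add: Modules.additive_def)
  show ?thesis
    unfolding edge_sym_def
  proof (intro conjI ballI)
    fix k assume k: "k \<in> E1 \<union> E6"
    then have "\<Phi> (- k) = \<Theta> \<circ> \<Phi> k"
      using \<Phi> by (simp add: edge_sym_def)
    then show "frame_act sc (\<Phi> (- k)) (X (- k)) = \<Theta> \<circ> frame_act sc (\<Phi> k) (X k)"
      by (simp only:)
        (rule frame_act_semilinear[where sc = sc and f = cnj, OF \<Theta>_antilin X16[OF k]])
  next
    fix k assume k: "k \<in> E2"
    then have "\<Phi> (k + e2) = \<tau> (0, 1) \<circ> \<Phi> k"
      using \<Phi> by (simp add: edge_sym_def)
    then show "frame_act sc (\<Phi> (k + e2)) (X (k + e2)) = \<tau> (0, 1) \<circ> frame_act sc (\<Phi> k) (X k)"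
      using X2[OF k] by (simp only:)
        (rule frame_act_semilinear[where sc = sc and f = "\<lambda>c. c", OF \<tau>_lin[of "(0, 1)"]], simp)
  next
    fix k assume k: "k \<in> E3 \<union> E4"
    then have "\<Phi> (e1 - k) = \<tau> (1, 0) \<circ> \<Theta> \<circ> \<Phi> k"
      using \<Phi> by (simp add: edge_sym_def)
    then show "frame_act sc (\<Phi> (e1 - k)) (X (e1 - k)) =
        \<tau> (1, 0) \<circ> \<Theta> \<circ> frame_act sc (\<Phi> k) (X k)"
      by (simp only:)
         (rule frame_act_semilinear[where sc = sc and f = cnj, OF \<tau>\<Theta>_antilin X34[OF k]])
  next
    fix k assume k: "k \<in> E5"
    then have "\<Phi> (k - e2) = inv (\<tau> (0, 1)) \<circ> \<Phi> k"
      using \<Phi> by (simp add: edge_sym_def)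
    then show "frame_act sc (\<Phi> (k - e2)) (X (k - e2)) =
        inv (\<tau> (0, 1)) \<circ> frame_act sc (\<Phi> k) (X k)"
      using X5[OF k] by (simp only:)
        (rule frame_act_semilinear[where sc = sc and f = "\<lambda>c. c", OF \<tau>_inv_lin], simp)
  qed
qed

theorem mainTheorem5:
  fixes sc :: "complex \<Rightarrow> 'h::ab_group_add \<Rightarrow> 'h"
    and ip :: "'h \<Rightarrow> 'h \<Rightarrow> complex"
    and P :: "real \<times> real \<Rightarrow> 'h \<Rightarrow> 'h"
    and \<tau> :: "int \<times> int \<Rightarrow> 'h \<Rightarrow> 'h"
    and \<Theta> :: "'h \<Rightarrow> 'h"
    and r :: int
  assumes H: "hilbert_space sc ip" "separable_hs ip"
    and P1: "\<forall>k. orth_projector sc ip (P k) \<and> (\<exists>b :: 'm::finite \<Rightarrow> 'h. is_onb sc ip (range (P k)) b)"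
    and P2: "unitary_rep sc ip \<tau>" "\<forall>k l. P (k + lat l) = \<tau> l \<circ> P k \<circ> inv (\<tau> l)"
    and P3: "antiunitary_op sc ip \<Theta>" "\<Theta> \<circ> \<Theta> = id" "\<forall>k. P (-k) = \<Theta> \<circ> P k \<circ> inv \<Theta>"
    and P4: "\<forall>l. \<Theta> \<circ> \<tau> l = inv (\<tau> l) \<circ> \<Theta>"
  shows "\<exists>X :: real \<times> real \<Rightarrow> complex^'m^'m.
           (\<forall>k\<in>bdry. unitary_mat (X k)) \<and>
           piecewise_smooth_on (X \<circ> bdry_path) {0..1} \<and>
           winding_number (\<lambda>t. det (X (bdry_path t))) 0 = - of_int r \<and>
           (\<forall>\<Phi> :: real \<times> real \<Rightarrow> 'm \<Rightarrow> 'h.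
              (\<forall>k\<in>bdry. is_onb sc ip (range (P k)) (\<Phi> k)) \<and> edge_sym \<Theta> \<tau> \<Phi>
              \<longrightarrow> edge_sym \<Theta> \<tau> (\<lambda>k. frame_act sc (\<Phi> k) (X k))) \<and>
           (\<forall>k\<in>bdry. X k \<noteq> mat 1 \<longrightarrow> k \<in> E3 \<union> E4)"
proof -
  define X where "X k = phase_mat (undefined :: 'm) (boundary_phase (- r) k)" for k
  have X_path: "X \<circ> bdry_path = phase_mat undefined \<circ> (boundary_phase (- r) \<circ> bdry_path)"
    by (simp add: X_def fun_eq_iff)
  have "piecewise_smooth_on (X \<circ> bdry_path) {0..1}"
    unfolding X_path
    by (intro piecewise_smooth_on_unit_interval piecewise_smooth_path_phase_mat_boundary_phase
        path_continuous_image path_boundary_phase_bdry_path continuous_on_phase_mat)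
  moreover have "winding_number (\<lambda>t. det (X (bdry_path t))) 0 = - of_int r"
    using winding_number_boundary_phase_bdry_path[of "- r"]
    by (simp add: X_def det_phase_mat o_def)
  moreover have "edge_sym \<Theta> \<tau> (\<lambda>k. frame_act sc (\<Phi> k) (X k))" if "edge_sym \<Theta> \<tau> \<Phi>" for \<Phi>
  proof (rule edge_sym_frame_act[OF _ _ P3(1) _ _ _ _ that])
    show "complex_inner_space sc ip"
      using H(1) by (simp add: hilbert_space_def)
    show "unitary_op sc ip (\<tau> l)" for l
      using P2(1) by (simp add: unitary_rep_def del: split_paired_All)
  qed (simp_all add: X_def boundary_phase_E1_E6
      boundary_phase_add_e2 boundary_phase_diff_e2 boundary_phase_e1_diff fst_E3_E4)
  moreover have "X k = mat 1" if "k \<in> bdry" "k \<notin> E3 \<union> E4" for k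
    using that by (simp add: X_def boundary_phase_off_E3_E4 phase_mat_one)
  ultimately show ?thesis
    by (intro exI[of _ X]) (auto simp: X_def unitary_mat_phase_mat norm_boundary_phase)
qed

end
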